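(* Let $0<\beta<1$. There exists a positive strictly increasing function $\eta_1:(0,\infty)\to(0,\infty)$ depending only on $\beta$ such that the following holds. Let $T>0$, $c>0$, $F\in C^0([0,T];[0,\infty))$ and $u\in C^1([0,T];[0,\infty))$ with $$F(t)\ge c\,t^{\frac\beta{1-\beta}},\qquad \dot u(t)\ge F(t)-2u^\beta(t)\quad\text{on }[0,T].$$ Then $u(t)\ge\eta_1(c)\,t^{\frac1{1-\beta}}$ for all $t\in[0,T]$. *)

theory Defs
  imports "HOL-Analysis.Analysis"
begin

end

theory Submission
  imports Defs
begin

text \<open>Let \<open>\<gamma> = 1/(1-\<beta>)\<close>, so that \<open>\<gamma>\<beta> = \<gamma> - 1 = \<beta>/(1-\<beta>)\<close>. For \<open>v t = \<eta> t powr \<gamma>\<close>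
  both \<open>v'\<close> and \<open>v powr \<beta>\<close> are multiples of \<open>t powr (\<beta>/(1-\<beta>))\<close>, hence \<open>v\<close> is a
  subsolution, \<open>v' \<le> c t powr (\<beta>/(1-\<beta>)) - 2 v powr \<beta>\<close>, as soon as \<open>\<gamma>\<eta> + 2 \<eta> powr \<beta> \<le> c\<close>.
  Wherever \<open>u < v\<close> we get \<open>u powr \<beta> < v powr \<beta>\<close> and therefore \<open>(u - v)' > 0\<close>, so \<open>u - v\<close>,
  which is nonnegative at \<open>0\<close>, can never become negative. The bound on \<open>\<gamma>\<eta> + 2 \<eta> powr \<beta>\<close>
  holds for \<open>\<eta> = min (c/(2\<gamma>)) ((c/4) powr (1/\<beta>))\<close>, which is positive and strictly
  increasing in \<open>c\<close>.\<close>

lemma nonneg_if_deriv_pos_where_neg: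
  fixes w w' :: "real \<Rightarrow> real"
  assumes "a \<le> b" and cont: "continuous_on {a..b} w" and wa: "w a \<ge> 0"
    and deriv: "\<And>x. a < x \<Longrightarrow> x < b \<Longrightarrow> (w has_real_derivative w' x) (at x)"
    and pos: "\<And>x. a < x \<Longrightarrow> x < b \<Longrightarrow> w x < 0 \<Longrightarrow> w' x > 0"
  shows "w b \<ge> 0"
proof (rule ccontr)
  assume wb: "\<not> w b \<ge> 0"
  define S where "S = {a..b} \<inter> w -` {0..}"
  have "closed S"
    unfolding S_def by (rule continuous_closed_preimage[OF cont]) auto
  moreover have "bdd_above S" and "a \<in> S"
    unfolding S_def using \<open>a \<le> b\<close> wa by (auto intro: bdd_aboveI[of _ b])
  ultimately have "Sup S \<in> S" using closed_contains_Sup by blast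
  define s where "s = Sup S"
  have ws: "w s \<ge> 0" and "a \<le> s" "s \<le> b" using \<open>Sup S \<in> S\<close> by (auto simp: S_def s_def)
  then have "s < b" using wb by (cases "s = b") auto
  have neg_after_s: "w x < 0" if "s < x" "x \<le> b" for x
  proof (rule ccontr)
    assume "\<not> w x < 0"
    then have "x \<in> S" using that \<open>a \<le> s\<close> by (auto simp: S_def)
    then have "x \<le> s" unfolding s_def using \<open>bdd_above S\<close> by (rule cSup_upper)
    then show False using that by simp
  qed
  have "continuous_on {s..b} w" using cont by (rule continuous_on_subset) (use \<open>a \<le> s\<close> in auto)
  then obtain l z where z: "s < z" "z < b" and dz: "(w has_real_derivative l) (at z)"
    and mvt: "w b - w s = (b - s) * l"
    using MVT[OF \<open>s < b\<close>] deriv \<open>a \<le> s\<close> by (metis real_differentiable_def order_le_less_trans)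
  have "l = w' z" using DERIV_unique[OF dz deriv] z \<open>a \<le> s\<close> by simp
  then have "l > 0" using pos neg_after_s z \<open>a \<le> s\<close> by simp
  then have "w b - w s > 0" using mvt \<open>s < b\<close> by simp
  then show False using ws wb by simp
qed

definition power_rate :: "real \<Rightarrow> real \<Rightarrow> real" where
  "power_rate \<beta> c = min (c * (1 - \<beta>) / 2) ((c / 4) powr (1 / \<beta>))"

lemma power_rate_pos:
  assumes "\<beta> < 1" "c > 0"
  shows "power_rate \<beta> c > 0"
  using assms by (simp add: power_rate_def)

lemma strict_mono_on_power_rate:
  assumes "0 < \<beta>" "\<beta> < 1"
  shows "strict_mono_on {0<..} (power_rate \<beta>)"
proof (rule strict_mono_onI)
  fix a b :: real assume ab: "a \<in> {0<..}" "b \<in> {0<..}" "a < b"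
  have "a * (1 - \<beta>) / 2 < b * (1 - \<beta>) / 2" using ab assms by simp
  moreover have "(a / 4) powr (1 / \<beta>) < (b / 4) powr (1 / \<beta>)"
    using ab assms by (intro powr_less_mono2) auto
  ultimately show "power_rate \<beta> a < power_rate \<beta> b"
    unfolding power_rate_def by linarith
qed

lemma power_rate_bound:
  assumes "0 < \<beta>" "\<beta> < 1" "c > 0"
  shows "power_rate \<beta> c / (1 - \<beta>) + 2 * power_rate \<beta> c powr \<beta> \<le> c"
proof -
  let ?\<eta> = "power_rate \<beta> c"
  have "?\<eta> / (1 - \<beta>) \<le> (c * (1 - \<beta>) / 2) / (1 - \<beta>)"
    using assms by (intro divide_right_mono) (auto simp: power_rate_def)
  also have "\<dots> = c / 2" using assms by (simp add: field_simps)
  finally have half: "?\<eta> / (1 - \<beta>) \<le> c / 2" .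
  have "?\<eta> powr \<beta> \<le> ((c / 4) powr (1 / \<beta>)) powr \<beta>"
    using power_rate_pos[of \<beta> c] assms by (intro powr_mono2) (auto simp: power_rate_def)
  also have "\<dots> = c / 4" using assms by (simp add: powr_powr)
  finally show ?thesis using half by linarith
qed

lemma power_lower_bound_by_comparison:
  fixes \<beta> \<eta> c T t :: real and u u' :: "real \<Rightarrow> real"
  assumes "0 < \<beta>" "\<beta> < 1" "\<eta> > 0"
    and rate: "\<eta> / (1 - \<beta>) + 2 * \<eta> powr \<beta> \<le> c"
    and deriv: "\<And>t. t \<in> {0..T} \<Longrightarrow> (u has_real_derivative u' t) (at t within {0..T})"
    and nonneg: "\<And>t. t \<in> {0..T} \<Longrightarrow> u t \<ge> 0"
    and ineq: "\<And>t. t \<in> {0..T} \<Longrightarrow> u' t \<ge> c * t powr (\<beta> / (1 - \<beta>)) - 2 * u t powr \<beta>"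
    and t: "t \<in> {0..T}"
  shows "u t \<ge> \<eta> * t powr (1 / (1 - \<beta>))"
proof -
  define \<gamma> where "\<gamma> = 1 / (1 - \<beta>)"
  have "\<gamma> > 0" using assms by (simp add: \<gamma>_def)
  have \<gamma>_minus_1: "\<gamma> - 1 = \<beta> / (1 - \<beta>)" and "\<gamma> * \<beta> = \<gamma> - 1"
    using assms by (simp_all add: \<gamma>_def field_simps)
  define v where "v x = \<eta> * x powr \<gamma>" for x
  have sub: "{0..t} \<subseteq> {0..T}" using t by auto
  have "continuous_on {0..T} u"
    using deriv by (metis DERIV_continuous continuous_on_eq_continuous_within)
  moreover have "continuous_on {0..t} v"
    unfolding v_def using \<open>\<gamma> > 0\<close> by (intro continuous_intros continuous_on_powr') auto
  ultimately have cont: "continuous_on {0..t} (\<lambda>x. u x - v x)"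
    using continuous_on_subset[OF _ sub] by (intro continuous_intros) auto
  have start: "u 0 - v 0 \<ge> 0" using nonneg t \<open>\<gamma> > 0\<close> by (simp add: v_def)
  have deriv_diff: "((\<lambda>x. u x - v x) has_real_derivative u' x - \<eta> * (\<gamma> * x powr (\<gamma> - 1))) (at x)"
    if "0 < x" "x < t" for x
  proof -
    have "(u has_real_derivative u' x) (at x within {0..T})" using deriv that t by auto
    moreover have "at x within {0..T} = at x" using that t by (intro at_within_Icc_at) auto
    moreover have "(v has_real_derivative \<eta> * (\<gamma> * x powr (\<gamma> - 1))) (at x)"
      unfolding v_def using that by (intro DERIV_cmult has_real_derivative_powr) auto
    ultimately show ?thesis by (auto intro: DERIV_diff)
  qed
  have pos_where_below: "u' x - \<eta> * (\<gamma> * x powr (\<gamma> - 1)) > 0"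
    if x: "0 < x" "x < t" and below: "u x - v x < 0" for x
  proof -
    have xT: "x \<in> {0..T}" using x t by auto
    have "u x powr \<beta> < v x powr \<beta>"
      using below nonneg[OF xT] \<open>0 < \<beta>\<close> by (intro powr_less_mono2) auto
    also have "v x powr \<beta> = \<eta> powr \<beta> * x powr (\<gamma> - 1)"
      unfolding v_def using \<open>\<eta> > 0\<close> x by (simp add: powr_mult powr_powr \<open>\<gamma> * \<beta> = \<gamma> - 1\<close>)
    finally have "u x powr \<beta> < \<eta> powr \<beta> * x powr (\<gamma> - 1)" .
    moreover have "u' x \<ge> c * x powr (\<gamma> - 1) - 2 * u x powr \<beta>"
      unfolding \<gamma>_minus_1 by (rule ineq[OF xT])
    moreover have "(c - 2 * \<eta> powr \<beta>) * x powr (\<gamma> - 1)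
        = c * x powr (\<gamma> - 1) - 2 * (\<eta> powr \<beta> * x powr (\<gamma> - 1))"
      by (simp add: algebra_simps)
    ultimately have "u' x > (c - 2 * \<eta> powr \<beta>) * x powr (\<gamma> - 1)" by linarith
    moreover have "(c - 2 * \<eta> powr \<beta>) * x powr (\<gamma> - 1) \<ge> \<eta> * (\<gamma> * x powr (\<gamma> - 1))"
    proof -
      have "\<eta> * \<gamma> = \<eta> / (1 - \<beta>)" by (simp add: \<gamma>_def)
      then have "\<eta> * \<gamma> \<le> c - 2 * \<eta> powr \<beta>" using rate by linarith
      then have "\<eta> * \<gamma> * x powr (\<gamma> - 1) \<le> (c - 2 * \<eta> powr \<beta>) * x powr (\<gamma> - 1)"
        using x by (intro mult_right_mono) auto
      then show ?thesis by (simp only: mult.assoc)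
    qed
    ultimately show ?thesis by simp
  qed
  have "u t - v t \<ge> 0"
    using nonneg_if_deriv_pos_where_neg[OF _ cont start deriv_diff pos_where_below] t by simp
  then show ?thesis by (simp add: v_def \<gamma>_def)
qed

theorem lemmaA12:
  fixes \<beta> :: real
  assumes "0 < \<beta>" and "\<beta> < 1"
  shows "\<exists>\<eta>1 :: real \<Rightarrow> real.
    (\<forall>c>0. \<eta>1 c > 0) \<and> strict_mono_on {0<..} \<eta>1 \<and>
    (\<forall>(T::real) (c::real) (F::real \<Rightarrow> real) (u::real \<Rightarrow> real) (u'::real \<Rightarrow> real).
       T > 0 \<longrightarrow> c > 0 \<longrightarrow>
       continuous_on {0..T} F \<longrightarrow> (\<forall>t\<in>{0..T}. F t \<ge> 0) \<longrightarrow>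
       (\<forall>t\<in>{0..T}. (u has_real_derivative u' t) (at t within {0..T})) \<longrightarrow>
       continuous_on {0..T} u' \<longrightarrow> (\<forall>t\<in>{0..T}. u t \<ge> 0) \<longrightarrow>
       (\<forall>t\<in>{0..T}. F t \<ge> c * t powr (\<beta> / (1 - \<beta>))) \<longrightarrow>
       (\<forall>t\<in>{0..T}. u' t \<ge> F t - 2 * (u t) powr \<beta>) \<longrightarrow>
       (\<forall>t\<in>{0..T}. u t \<ge> \<eta>1 c * t powr (1 / (1 - \<beta>))))"
proof (intro exI[of _ "power_rate \<beta>"] conjI allI impI ballI)
  show "power_rate \<beta> c > 0" if "c > 0" for c
    using power_rate_pos[OF \<open>\<beta> < 1\<close> that] .
  show "strict_mono_on {0<..} (power_rate \<beta>)"
    using strict_mono_on_power_rate[OF assms] .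
next
  fix T c t :: real and F u u' :: "real \<Rightarrow> real"
  assume "c > 0"
    and deriv: "\<forall>t\<in>{0..T}. (u has_real_derivative u' t) (at t within {0..T})"
    and nonneg: "\<forall>t\<in>{0..T}. u t \<ge> 0"
    and F: "\<forall>t\<in>{0..T}. F t \<ge> c * t powr (\<beta> / (1 - \<beta>))"
    and ineq: "\<forall>t\<in>{0..T}. u' t \<ge> F t - 2 * (u t) powr \<beta>"
    and "t \<in> {0..T}"
  have "\<forall>t\<in>{0..T}. u' t \<ge> c * t powr (\<beta> / (1 - \<beta>)) - 2 * u t powr \<beta>"
    using F ineq by fastforce
  then show "u t \<ge> power_rate \<beta> c * t powr (1 / (1 - \<beta>))"
    using power_lower_bound_by_comparison[OF assms power_rate_pos[OF \<open>\<beta> < 1\<close> \<open>c > 0\<close>]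
        power_rate_bound[OF assms \<open>c > 0\<close>]] deriv nonneg \<open>t \<in> {0..T}\<close>
    by blast
qed

end
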